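(* Let $f_j$, $j\in J=\{1,\dots,m\}$, be convex functions on $\mathbb{R}^n$, let $D=\{x\in\mathbb{R}^n: f_j(x)\le 0,\ j\in J\}$, and let $f$ be a continuous function on $\mathbb{R}^n$ attaining its minimum on $D$. Assume that $f$ is convex, that each $f_j$ is strongly convex with constant $\mu_j>0$, that $D$ satisfies the Slater condition, and that no point of absolute (unconstrained) minimum of $f$ on $\mathbb{R}^n$ (if such a point exists) belongs to $\operatorname{int} D$. Then the problem $\min\{f(x): x\in D\}$ has a unique solution.
   Context: For each $j\in J$ the set $D_j=\{x: f_j(x)\le 0\}$ is assumed to have nonempty interior. *)

theory Defs
  imports "HOL-Analysis.Analysis"
begin

definition strongly_convex_on :: "'a::real_normed_vector set \<Rightarrow> real \<Rightarrow> ('a \<Rightarrow> real) \<Rightarrow> bool" where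
  "strongly_convex_on S mu g \<longleftrightarrow>
     (\<forall>x\<in>S. \<forall>y\<in>S. \<forall>t::real. 0 \<le> t \<and> t \<le> 1 \<longrightarrow>
        g (t *\<^sub>R x + (1 - t) *\<^sub>R y) \<le> t * g x + (1 - t) * g y - mu / 2 * t * (1 - t) * (norm (x - y))\<^sup>2)"

definition slater :: "'i set \<Rightarrow> ('i \<Rightarrow> 'a \<Rightarrow> real) \<Rightarrow> bool" where
  "slater J fs \<longleftrightarrow> (\<exists>x. \<forall>j\<in>J. fs j x < 0)"

end

theory Submission
  imports Defs
begin

text \<open>If \<open>x \<noteq> y\<close> were two minimisers, strong convexity of the constraints would put their
  midpoint \<open>z\<close> strictly inside every \<open>D\<^sub>j\<close>, hence in the interior of \<open>D\<close>, while convexity of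
  \<open>f\<close> makes \<open>z\<close> a minimiser as well. A convex function minimised over \<open>D\<close> at an interior
  point of \<open>D\<close> is minimised there over the whole space, contradicting the hypothesis on
  absolute minima.\<close>

lemma strongly_convex_on_midpoint_less:
  assumes "strongly_convex_on S mu g" "mu > 0" "x \<in> S" "y \<in> S" "x \<noteq> y"
  shows "g (midpoint x y) < (g x + g y) / 2"
proof -
  have "g (t *\<^sub>R x + (1 - t) *\<^sub>R y)
      \<le> t * g x + (1 - t) * g y - mu / 2 * t * (1 - t) * (norm (x - y))\<^sup>2"
    if "0 \<le> t" "t \<le> 1" for t
    using assms(1,3,4) that unfolding strongly_convex_on_def by blast
  from this[of "1/2"] have "g (midpoint x y) \<le> (g x + g y) / 2 - mu / 8 * (norm (x - y))\<^sup>2"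
    by (simp add: midpoint_def scaleR_add_right add_divide_distrib)
  moreover have "mu / 8 * (norm (x - y))\<^sup>2 > 0"
    using assms(2,5) by simp
  ultimately show ?thesis
    by linarith
qed

lemma convex_on_midpoint_le:
  assumes "convex_on S f" "x \<in> S" "y \<in> S"
  shows "f (midpoint x y) \<le> (f x + f y) / 2"
  using convex_onD[OF assms(1), of "1/2" x y] assms(2,3) by (simp add: midpoint_def scaleR_add_right)

lemma strict_sublevels_subset_interior:
  fixes g :: "'i \<Rightarrow> 'a::topological_space \<Rightarrow> real"
  assumes "finite J" "\<And>j. j \<in> J \<Longrightarrow> continuous_on UNIV (g j)"
  shows "{x. \<forall>j\<in>J. g j x < 0} \<subseteq> interior {x. \<forall>j\<in>J. g j x \<le> 0}"
proof (rule interior_maximal)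
  have "{x. \<forall>j\<in>J. g j x < 0} = (\<Inter>j\<in>J. {x. g j x < 0})"
    by auto
  then show "open {x. \<forall>j\<in>J. g j x < 0}"
    using assms by (auto intro!: open_INT open_Collect_less continuous_on_const)
qed auto

lemma convex_on_interior_min_imp_global_min:
  fixes f :: "'a::real_normed_vector \<Rightarrow> real"
  assumes f: "convex_on UNIV f" and z: "z \<in> interior S" and min: "\<forall>v\<in>S. f z \<le> f v"
  shows "f z \<le> f w"
proof -
  obtain e where e: "e > 0" "cball z e \<subseteq> S"
    using z mem_interior_cball by blast
  show ?thesis
  proof (cases "dist z w \<le> e")
    case True
    then show ?thesis
      using e min by auto
  next
    case False
    define t where "t = e / dist z w"
    define p where "p = (1 - t) *\<^sub>R z + t *\<^sub>R w"
    have "0 < dist z w" "e < dist z w"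
      using False e by auto
    with e(1) have t: "0 < t" "t < 1"
      unfolding t_def by (auto simp: field_simps)
    have "dist z p = t * dist z w"
      using t by (simp add: p_def dist_norm algebra_simps flip: scaleR_diff_right)
    then have "p \<in> S"
      using e False by (auto simp: t_def)
    then have "f z \<le> f p"
      using min by blast
    also have "\<dots> \<le> (1 - t) * f z + t * f w"
      using convex_onD[OF f, of t z w] t unfolding p_def by simp
    finally show ?thesis
      using t by (simp add: algebra_simps)
  qed
qed

theorem theorem1p1p3:
  fixes f :: "real ^ 'n \<Rightarrow> real"
    and fs :: "nat \<Rightarrow> real ^ 'n \<Rightarrow> real"
    and mu :: "nat \<Rightarrow> real"
    and m :: nat
    and D :: "(real ^ 'n) set"
  assumes D_def: "D = {x. \<forall>j\<in>{1..m}. fs j x \<le> 0}"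
    and fs_convex: "\<forall>j\<in>{1..m}. convex_on UNIV (fs j)"
    and fs_strong: "\<forall>j\<in>{1..m}. mu j > 0 \<and> strongly_convex_on UNIV (mu j) (fs j)"
    and Dj_int: "\<forall>j\<in>{1..m}. interior {x. fs j x \<le> 0} \<noteq> {}"
    and f_cont: "continuous_on UNIV f"
    and f_convex: "convex_on UNIV f"
    and f_attains: "\<exists>x\<in>D. \<forall>y\<in>D. f x \<le> f y"
    and slater: "slater {1..m} fs"
    and no_abs_min_in_int: "\<forall>x. (\<forall>y. f x \<le> f y) \<longrightarrow> x \<notin> interior D"
  shows "\<exists>!x. x \<in> D \<and> (\<forall>y\<in>D. f x \<le> f y)"
proof (rule ex_ex1I)
  show "\<exists>x. x \<in> D \<and> (\<forall>y\<in>D. f x \<le> f y)"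
    using f_attains by blast
next
  fix x y
  assume x: "x \<in> D \<and> (\<forall>v\<in>D. f x \<le> f v)" and y: "y \<in> D \<and> (\<forall>v\<in>D. f y \<le> f v)"
  show "x = y"
  proof (rule ccontr)
    assume "x \<noteq> y"
    define z where "z = midpoint x y"
    have "fs j z < 0" if "j \<in> {1..m}" for j
      using strongly_convex_on_midpoint_less[of UNIV "mu j" "fs j" x y] fs_strong x y \<open>x \<noteq> y\<close>
        that D_def by (fastforce simp: z_def)
    moreover have "continuous_on UNIV (fs j)" if "j \<in> {1..m}" for j
      using convex_on_continuous[OF open_UNIV] fs_convex that by blast
    ultimately have z_int: "z \<in> interior D"
      unfolding D_def using strict_sublevels_subset_interior[of "{1..m}" fs] by blast
    have "f z \<le> f x"
      using convex_on_midpoint_le[OF f_convex UNIV_I UNIV_I, of x y] x y by (force simp: z_def)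
    then have "\<forall>v\<in>D. f z \<le> f v"
      using x by force
    then have "\<forall>w. f z \<le> f w"
      using convex_on_interior_min_imp_global_min[OF f_convex z_int] by blast
    then show False
      using no_abs_min_in_int z_int by blast
  qed
qed

end
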